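(* Assume $0\le P_F(j)<P_D(j)\le1$. Then $\frac{\partial^2}{\partial P_j^2}J(P_1,\dots,P_K)\le0$ for all $P_j\ge0$ (and all $P_i\ge 0$, $i\ne j$) if and only if $$\frac34-\frac12P_F(j)-\frac14\sqrt{1+12P_F(j)-12P_F(j)^2}\ \le\ P_D(j)\ \le\ \frac34-\frac12P_F(j)+\frac14\sqrt{1+12P_F(j)-12P_F(j)^2}.$$
   Context: Fix $K\ge1$, $\sigma^2>0$, and for $j=1,\dots,K$ channel gains $g_j>0$ and local probabilities $P_D(j),P_F(j)\in[0,1]$. Define $\alpha_F(j)=P_F(j)(1-P_D(j))+P_D(j)(P_D(j)-P_F(j))$, $\alpha_D(j)=P_D(j)(1-P_F(j))-P_F(j)(P_D(j)-P_F(j))$, $\beta_F(j)=P_D(j)(1-P_D(j))$, $\beta_D(j)=P_F(j)(1-P_F(j))$, and for $P_1,\dots,P_K\ge0$ $$J(P_1,\dots,P_K)=\sum_{j=1}^K\left[\frac{\sigma^2+\alpha_F(j)g_jP_j}{\sigma^2+\beta_F(j)g_jP_j}+\frac{\sigma^2+\alpha_D(j)g_jP_j}{\sigma^2+\beta_D(j)g_jP_j}\right].$$ *)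

theory Defs
  imports "HOL-Analysis.Analysis"
begin

definition alphaF :: "real \<Rightarrow> real \<Rightarrow> real" where
  "alphaF pd pf = pf * (1 - pd) + pd * (pd - pf)"

definition alphaD :: "real \<Rightarrow> real \<Rightarrow> real" where
  "alphaD pd pf = pd * (1 - pf) - pf * (pd - pf)"

definition betaF :: "real \<Rightarrow> real \<Rightarrow> real" where
  "betaF pd pf = pd * (1 - pd)"

definition betaD :: "real \<Rightarrow> real \<Rightarrow> real" where
  "betaD pd pf = pf * (1 - pf)"

text \<open>The objective J(P_1,...,P_K); sensors are indexed by {1..K}, the powers
  form a function P :: nat => real (values outside {1..K} are irrelevant).\<close>
definition Jfun :: "nat \<Rightarrow> real \<Rightarrow> (nat \<Rightarrow> real) \<Rightarrow> (nat \<Rightarrow> real) \<Rightarrow> (nat \<Rightarrow> real)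
    \<Rightarrow> (nat \<Rightarrow> real) \<Rightarrow> real" where
  "Jfun K \<sigma>2 g PD PF P =
     (\<Sum>j=1..K. (\<sigma>2 + alphaF (PD j) (PF j) * g j * P j) / (\<sigma>2 + betaF (PD j) (PF j) * g j * P j)
              + (\<sigma>2 + alphaD (PD j) (PF j) * g j * P j) / (\<sigma>2 + betaD (PD j) (PF j) * g j * P j))"

end

theory Submission
  imports Defs
begin

text \<open>Only the j-th summand of J depends on P_j, and it is a sum of two Moebius functions
  (s + a t) / (s + b t), whose second derivatives are 2 s b (b - a) / (s + b t)^3. With
  d = P_D(j), f = P_F(j) and x = g_j P_j this becomes
  2 s g_j^2 (d - f) (m(d) / (s + v(d) x)^3 - m(f) / (s + v(f) x)^3), where v(p) = p (1 - p) and
  m(p) = p (1 - p) (1 - 2 p) are the variance and third central moment of a Bernoulli(p)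
  variable. At x = 0 the sign is that of m(d) - m(f), and m(d) \<le> m(f) is the stated quadratic
  condition on d. Conversely, if m(d) \<le> m(f), the sign persists for all x \<ge> 0: either
  m(d) \<le> 0 \<le> m(f), or d and f lie on the same side of 1/2, where v is monotone and the
  denominators only reinforce m(d) \<le> m(f).\<close>

definition bernoulli_mu3 :: "real \<Rightarrow> real" where
  "bernoulli_mu3 p = p * (1 - p) * (1 - 2 * p)"

lemma has_real_derivative_affine_ratio:
  fixes s a b t :: real
  assumes "s + b * t \<noteq> 0"
  shows "((\<lambda>t. (s + a * t) / (s + b * t)) has_real_derivative s * (a - b) / (s + b * t)^2) (at t)"
  using assms by (auto intro!: derivative_eq_intros simp: field_simps power2_eq_square)

lemma has_real_derivative_divide_affine_square:
  fixes s b c t :: real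
  assumes "s + b * t \<noteq> 0"
  shows "((\<lambda>t. c / (s + b * t)^2) has_real_derivative - 2 * b * c / (s + b * t)^3) (at t)"
  using assms by (auto intro!: derivative_eq_intros simp: divide_simps power2_eq_square power3_eq_cube)

lemma deriv_deriv_eqI:
  fixes f f' :: "real \<Rightarrow> real"
  assumes "open S" "x \<in> S"
    and "\<And>y. y \<in> S \<Longrightarrow> (f has_real_derivative f' y) (at y)"
    and "(f' has_real_derivative f'') (at x)"
  shows "deriv (deriv f) x = f''"
proof -
  have "(deriv f has_real_derivative f'') (at x)"
    using assms(4,1,2) by (rule has_field_derivative_transform_within_open)
      (metis assms(3) DERIV_imp_deriv)
  then show ?thesis by (rule DERIV_imp_deriv)
qed

lemma deriv2_sum_affine_ratios:
  fixes c s a1 b1 a2 b2 x :: real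
  assumes "s + b1 * x \<noteq> 0" "s + b2 * x \<noteq> 0"
  shows "deriv (deriv (\<lambda>t. c + (s + a1 * t) / (s + b1 * t) + (s + a2 * t) / (s + b2 * t))) x
    = 2 * s * b1 * (b1 - a1) / (s + b1 * x)^3 + 2 * s * b2 * (b2 - a2) / (s + b2 * x)^3"
proof (rule deriv_deriv_eqI)
  let ?S = "{t. s + b1 * t \<noteq> 0 \<and> s + b2 * t \<noteq> 0}"
  show "open ?S"
    by (intro open_Collect_conj open_Collect_neq continuous_intros)
  show "x \<in> ?S" using assms by simp
  show "((\<lambda>t. c + (s + a1 * t) / (s + b1 * t) + (s + a2 * t) / (s + b2 * t)) has_real_derivative
      s * (a1 - b1) / (s + b1 * y)^2 + s * (a2 - b2) / (s + b2 * y)^2) (at y)" if "y \<in> ?S" for y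
    using DERIV_add[OF DERIV_add[OF DERIV_const has_real_derivative_affine_ratio]
        has_real_derivative_affine_ratio] that by simp
  show "((\<lambda>t. s * (a1 - b1) / (s + b1 * t)^2 + s * (a2 - b2) / (s + b2 * t)^2) has_real_derivative
      2 * s * b1 * (b1 - a1) / (s + b1 * x)^3 + 2 * s * b2 * (b2 - a2) / (s + b2 * x)^3) (at x)"
    using DERIV_add[OF has_real_derivative_divide_affine_square[of s b1 x "s * (a1 - b1)"]
        has_real_derivative_divide_affine_square[of s b2 x "s * (a2 - b2)"]] assms
    by (simp add: algebra_simps)
qed

lemma Jfun_update_eq:
  assumes "j \<in> {1..K}"
  obtains c where "\<And>t. Jfun K \<sigma>2 g PD PF (P(j := t)) =
      c + (\<sigma>2 + alphaF (PD j) (PF j) * g j * t) / (\<sigma>2 + betaF (PD j) (PF j) * g j * t)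
        + (\<sigma>2 + alphaD (PD j) (PF j) * g j * t) / (\<sigma>2 + betaD (PD j) (PF j) * g j * t)"
proof -
  define T where "T i x = (\<sigma>2 + alphaF (PD i) (PF i) * g i * x) / (\<sigma>2 + betaF (PD i) (PF i) * g i * x)
      + (\<sigma>2 + alphaD (PD i) (PF i) * g i * x) / (\<sigma>2 + betaD (PD i) (PF i) * g i * x)" for i x
  have "Jfun K \<sigma>2 g PD PF (P(j := t)) = (\<Sum>i\<in>{1..K} - {j}. T i (P i)) + T j t" for t
  proof -
    have "Jfun K \<sigma>2 g PD PF (P(j := t)) = (\<Sum>i\<in>{1..K}. T i ((P(j := t)) i))"
      unfolding Jfun_def T_def ..
    also have "\<dots> = (\<Sum>i\<in>{1..K} - {j}. T i (P i)) + T j t"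
      using assms by (simp add: sum.remove add.commute)
    finally show ?thesis .
  qed
  then show ?thesis by (intro that) (simp add: T_def add.assoc)
qed

lemma betaF_mult_betaF_minus_alphaF: "betaF d f * (betaF d f - alphaF d f) = (d - f) * bernoulli_mu3 d"
  unfolding betaF_def alphaF_def bernoulli_mu3_def by algebra

lemma betaD_mult_betaD_minus_alphaD: "betaD d f * (betaD d f - alphaD d f) = - ((d - f) * bernoulli_mu3 f)"
  unfolding betaD_def alphaD_def bernoulli_mu3_def by algebra

lemma deriv2_Jfun_update:
  fixes PD PF :: "nat \<Rightarrow> real" and j :: nat and x :: real
  defines "d \<equiv> PD j" and "f \<equiv> PF j"
  assumes "j \<in> {1..K}"
    and "\<sigma>2 + d * (1 - d) * (g j * x) \<noteq> 0" and "\<sigma>2 + f * (1 - f) * (g j * x) \<noteq> 0"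
  shows "deriv (\<lambda>s. deriv (\<lambda>t. Jfun K \<sigma>2 g PD PF (P(j := t))) s) x =
    2 * \<sigma>2 * (g j)^2 * (d - f) *
      (bernoulli_mu3 d / (\<sigma>2 + d * (1 - d) * (g j * x))^3
       - bernoulli_mu3 f / (\<sigma>2 + f * (1 - f) * (g j * x))^3)"
proof -
  obtain c where c: "\<And>t. Jfun K \<sigma>2 g PD PF (P(j := t)) =
      c + (\<sigma>2 + alphaF d f * g j * t) / (\<sigma>2 + betaF d f * g j * t)
        + (\<sigma>2 + alphaD d f * g j * t) / (\<sigma>2 + betaD d f * g j * t)"
    using Jfun_update_eq[OF assms(3)] unfolding d_def f_def by blast
  have hF: "\<sigma>2 + betaF d f * g j * x = \<sigma>2 + d * (1 - d) * (g j * x)"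
    and hD: "\<sigma>2 + betaD d f * g j * x = \<sigma>2 + f * (1 - f) * (g j * x)"
    unfolding betaF_def betaD_def by simp_all
  have "deriv (\<lambda>s. deriv (\<lambda>t. Jfun K \<sigma>2 g PD PF (P(j := t))) s) x =
      2 * \<sigma>2 * (betaF d f * g j) * (betaF d f * g j - alphaF d f * g j) / (\<sigma>2 + betaF d f * g j * x)^3
      + 2 * \<sigma>2 * (betaD d f * g j) * (betaD d f * g j - alphaD d f * g j) / (\<sigma>2 + betaD d f * g j * x)^3"
    unfolding c
    by (rule deriv2_sum_affine_ratios) (simp_all only: hF hD assms(4,5) not_False_eq_True)
  also have "\<dots> =
      2 * \<sigma>2 * (g j)^2 * (betaF d f * (betaF d f - alphaF d f)) / (\<sigma>2 + d * (1 - d) * (g j * x))^3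
      + 2 * \<sigma>2 * (g j)^2 * (betaD d f * (betaD d f - alphaD d f)) / (\<sigma>2 + f * (1 - f) * (g j * x))^3"
    unfolding hF hD by (simp add: power2_eq_square algebra_simps)
  finally show ?thesis
    unfolding betaF_mult_betaF_minus_alphaF betaD_mult_betaD_minus_alphaD
    by (simp add: algebra_simps diff_divide_distrib add_divide_distrib)
qed

lemma bernoulli_var_affine_pos:
  fixes s p x :: real
  shows "0 < s \<Longrightarrow> 0 \<le> p \<Longrightarrow> p \<le> 1 \<Longrightarrow> 0 \<le> x \<Longrightarrow> 0 < s + p * (1 - p) * x"
  by (intro add_pos_nonneg mult_nonneg_nonneg) auto

lemma bernoulli_mu3_nonneg: "0 \<le> p \<Longrightarrow> p \<le> 1/2 \<Longrightarrow> 0 \<le> bernoulli_mu3 p"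
  unfolding bernoulli_mu3_def by (intro mult_nonneg_nonneg) auto

lemma bernoulli_mu3_nonpos: "1/2 \<le> p \<Longrightarrow> p \<le> 1 \<Longrightarrow> bernoulli_mu3 p \<le> 0"
  unfolding bernoulli_mu3_def by (intro mult_nonneg_nonpos mult_nonneg_nonneg) auto

lemma bernoulli_mu3_diff:
  "8 * (bernoulli_mu3 d - bernoulli_mu3 f) = (d - f) * ((4*d - 3 + 2*f)^2 - (1 + 12*f - 12*f^2))"
  unfolding bernoulli_mu3_def by algebra

lemma bernoulli_mu3_le_iff_between_roots:
  fixes d f :: real
  assumes "f < d"
  shows "bernoulli_mu3 d \<le> bernoulli_mu3 f \<longleftrightarrow>
    3/4 - f/2 - sqrt (1 + 12*f - 12*f^2) / 4 \<le> d \<and> d \<le> 3/4 - f/2 + sqrt (1 + 12*f - 12*f^2) / 4"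
proof -
  have "bernoulli_mu3 d \<le> bernoulli_mu3 f \<longleftrightarrow> 8 * (bernoulli_mu3 d - bernoulli_mu3 f) \<le> 0"
    by simp
  also have "\<dots> \<longleftrightarrow> (d - f) * ((4*d - 3 + 2*f)^2 - (1 + 12*f - 12*f^2)) \<le> 0"
    unfolding bernoulli_mu3_diff ..
  also have "\<dots> \<longleftrightarrow> (4*d - 3 + 2*f)^2 \<le> 1 + 12*f - 12*f^2"
    using assms by (simp add: mult_le_0_iff)
  also have "\<dots> \<longleftrightarrow> sqrt ((4*d - 3 + 2*f)^2) \<le> sqrt (1 + 12*f - 12*f^2)"
    by (rule real_sqrt_le_iff[symmetric])
  also have "\<dots> \<longleftrightarrow>
      3/4 - f/2 - sqrt (1 + 12*f - 12*f^2) / 4 \<le> d \<and> d \<le> 3/4 - f/2 + sqrt (1 + 12*f - 12*f^2) / 4"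
    unfolding real_sqrt_abs abs_le_iff by linarith
  finally show ?thesis .
qed

lemma bernoulli_mu3_divide_cube_mono:
  fixes s x d f :: real
  assumes "0 < s" "0 \<le> x" "0 \<le> f" "f < d" "d \<le> 1" "bernoulli_mu3 d \<le> bernoulli_mu3 f"
  shows "bernoulli_mu3 d / (s + d * (1 - d) * x)^3 \<le> bernoulli_mu3 f / (s + f * (1 - f) * x)^3"
proof -
  define p where "p = (s + d * (1 - d) * x)^3"
  define q where "q = (s + f * (1 - f) * x)^3"
  have "0 < p" "0 < q"
    unfolding p_def q_def using bernoulli_var_affine_pos assms(1-5) by simp_all
  have var_diff: "d * (1 - d) - f * (1 - f) = (d - f) * (1 - d - f)"
    by algebra
  consider "d < 1/2" | "1/2 < f" | "f \<le> 1/2" "1/2 \<le> d" by linarith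
  then show ?thesis
  proof cases
    case 1
    have "0 \<le> (d - f) * (1 - d - f)"
      using 1 assms(4) by (intro mult_nonneg_nonneg) auto
    then have "f * (1 - f) * x \<le> d * (1 - d) * x"
      using var_diff assms(2) by (intro mult_right_mono) auto
    then have "q \<le> p"
      unfolding p_def q_def using assms(1-5) by (intro power_mono) (auto intro!: add_nonneg_nonneg)
    have "bernoulli_mu3 d / p \<le> bernoulli_mu3 d / q"
      using \<open>q \<le> p\<close> \<open>0 < p\<close> \<open>0 < q\<close> 1 assms(3,4)
      by (intro divide_left_mono bernoulli_mu3_nonneg) auto
    also have "\<dots> \<le> bernoulli_mu3 f / q"
      using \<open>0 < q\<close> assms(6) by (intro divide_right_mono) auto
    finally show ?thesis unfolding p_def q_def .
  next
    case 2
    have "(d - f) * (1 - d - f) \<le> 0"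
      using 2 assms(4) by (intro mult_nonneg_nonpos) auto
    then have "d * (1 - d) * x \<le> f * (1 - f) * x"
      using var_diff assms(2) by (intro mult_right_mono) auto
    then have "p \<le> q"
      unfolding p_def q_def using assms(1-5) 2 by (intro power_mono) (auto intro!: add_nonneg_nonneg)
    have "bernoulli_mu3 d / p \<le> bernoulli_mu3 f / p"
      using \<open>0 < p\<close> assms(6) by (intro divide_right_mono) auto
    also have "\<dots> \<le> bernoulli_mu3 f / q"
      using \<open>p \<le> q\<close> \<open>0 < p\<close> \<open>0 < q\<close> 2 assms(4,5)
      by (intro divide_left_mono_neg bernoulli_mu3_nonpos) auto
    finally show ?thesis unfolding p_def q_def .
  next
    case 3
    have "bernoulli_mu3 d / p \<le> 0"
      using \<open>0 < p\<close> 3 assms(5) by (intro divide_nonpos_pos bernoulli_mu3_nonpos)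
    also have "0 \<le> bernoulli_mu3 f / q"
      using \<open>0 < q\<close> 3 assms(3) by (intro divide_nonneg_pos bernoulli_mu3_nonneg)
    finally show ?thesis unfolding p_def q_def .
  qed
qed

lemma bernoulli_mu3_divide_cube_mono_iff:
  fixes s d f :: real
  assumes "0 < s" "0 \<le> f" "f < d" "d \<le> 1"
  shows "(\<forall>x\<ge>0. bernoulli_mu3 d / (s + d * (1 - d) * x)^3 \<le> bernoulli_mu3 f / (s + f * (1 - f) * x)^3)
    \<longleftrightarrow> bernoulli_mu3 d \<le> bernoulli_mu3 f"
proof
  assume "\<forall>x\<ge>0. bernoulli_mu3 d / (s + d * (1 - d) * x)^3 \<le> bernoulli_mu3 f / (s + f * (1 - f) * x)^3"
  then have "bernoulli_mu3 d / s^3 \<le> bernoulli_mu3 f / s^3"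
    by (metis add_0_right mult_zero_right order_refl)
  then show "bernoulli_mu3 d \<le> bernoulli_mu3 f"
    using assms(1) by (simp add: divide_le_cancel)
qed (use assms bernoulli_mu3_divide_cube_mono in blast)

lemma deriv2_Jfun_update_nonpos_iff:
  fixes PD PF :: "nat \<Rightarrow> real" and j :: nat and x :: real
  defines "d \<equiv> PD j" and "f \<equiv> PF j"
  assumes "0 < \<sigma>2" "j \<in> {1..K}" "0 < g j" "0 \<le> f" "f < d" "d \<le> 1" "0 \<le> x"
  shows "deriv (\<lambda>s. deriv (\<lambda>t. Jfun K \<sigma>2 g PD PF (P(j := t))) s) x \<le> 0 \<longleftrightarrow>
    bernoulli_mu3 d / (\<sigma>2 + d * (1 - d) * (g j * x))^3
      \<le> bernoulli_mu3 f / (\<sigma>2 + f * (1 - f) * (g j * x))^3"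
proof -
  have "0 < \<sigma>2 + d * (1 - d) * (g j * x)" "0 < \<sigma>2 + f * (1 - f) * (g j * x)"
    using bernoulli_var_affine_pos assms(3-9) by simp_all
  then have "deriv (\<lambda>s. deriv (\<lambda>t. Jfun K \<sigma>2 g PD PF (P(j := t))) s) x =
      2 * \<sigma>2 * (g j)^2 * (d - f) *
        (bernoulli_mu3 d / (\<sigma>2 + d * (1 - d) * (g j * x))^3
         - bernoulli_mu3 f / (\<sigma>2 + f * (1 - f) * (g j * x))^3)"
    unfolding d_def f_def by (intro deriv2_Jfun_update assms(4)) auto
  moreover have "0 < 2 * \<sigma>2 * (g j)^2 * (d - f)"
    using assms(3,5,7) by simp
  ultimately show ?thesis
    by (metis diff_le_0_iff_le mult_le_cancel_left_pos mult_zero_right)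
qed

lemma deriv2_Jfun_update_nonpos_all_iff:
  fixes PD PF :: "nat \<Rightarrow> real" and j :: nat
  defines "d \<equiv> PD j" and "f \<equiv> PF j"
  assumes "0 < \<sigma>2" "j \<in> {1..K}" "0 < g j" "0 \<le> f" "f < d" "d \<le> 1"
  shows "(\<forall>P :: nat \<Rightarrow> real. (\<forall>i\<in>{1..K}. P i \<ge> 0) \<longrightarrow>
      deriv (\<lambda>s. deriv (\<lambda>t. Jfun K \<sigma>2 g PD PF (P(j := t))) s) (P j) \<le> 0) \<longleftrightarrow>
    (\<forall>x\<ge>0. bernoulli_mu3 d / (\<sigma>2 + d * (1 - d) * x)^3 \<le> bernoulli_mu3 f / (\<sigma>2 + f * (1 - f) * x)^3)"
proof (intro iffI allI impI)
  fix x :: real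
  assume H: "\<forall>P :: nat \<Rightarrow> real. (\<forall>i\<in>{1..K}. P i \<ge> 0) \<longrightarrow>
      deriv (\<lambda>s. deriv (\<lambda>t. Jfun K \<sigma>2 g PD PF (P(j := t))) s) (P j) \<le> 0"
    (is "\<forall>P. _ \<longrightarrow> ?D P \<le> 0") and "0 \<le> x"
  have "?D (\<lambda>_. x / g j) \<le> 0"
    by (rule H[rule_format]) (use \<open>0 \<le> x\<close> assms(5) in simp)
  then show "bernoulli_mu3 d / (\<sigma>2 + d * (1 - d) * x)^3 \<le> bernoulli_mu3 f / (\<sigma>2 + f * (1 - f) * x)^3"
    using deriv2_Jfun_update_nonpos_iff[of \<sigma>2 j K g PF PD "x / g j"] \<open>0 \<le> x\<close> assms
    by simp
next
  fix P :: "nat \<Rightarrow> real"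
  assume mono: "\<forall>x\<ge>0. bernoulli_mu3 d / (\<sigma>2 + d * (1 - d) * x)^3
      \<le> bernoulli_mu3 f / (\<sigma>2 + f * (1 - f) * x)^3"
    and "\<forall>i\<in>{1..K}. 0 \<le> P i"
  then have "0 \<le> P j"
    using assms(4) by simp
  with mono show "deriv (\<lambda>s. deriv (\<lambda>t. Jfun K \<sigma>2 g PD PF (P(j := t))) s) (P j) \<le> 0"
    using deriv2_Jfun_update_nonpos_iff[of \<sigma>2 j K g PF PD "P j" P] assms by auto
qed

theorem lemma3:
  fixes K :: nat and \<sigma>2 :: real and g PD PF :: "nat \<Rightarrow> real" and j :: nat
  assumes "K \<ge> 1" and "\<sigma>2 > 0"
    and "\<And>i. i \<in> {1..K} \<Longrightarrow> g i > 0"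
    and "\<And>i. i \<in> {1..K} \<Longrightarrow> 0 \<le> PD i \<and> PD i \<le> 1"
    and "\<And>i. i \<in> {1..K} \<Longrightarrow> 0 \<le> PF i \<and> PF i \<le> 1"
    and "j \<in> {1..K}"
    and "0 \<le> PF j" and "PF j < PD j" and "PD j \<le> 1"
  shows "(\<forall>P :: nat \<Rightarrow> real. (\<forall>i\<in>{1..K}. P i \<ge> 0) \<longrightarrow>
            deriv (\<lambda>s. deriv (\<lambda>t. Jfun K \<sigma>2 g PD PF (P(j := t))) s) (P j) \<le> 0)
     \<longleftrightarrow>
         (3/4 - PF j / 2 - sqrt (1 + 12 * PF j - 12 * (PF j)^2) / 4 \<le> PD j \<and>
          PD j \<le> 3/4 - PF j / 2 + sqrt (1 + 12 * PF j - 12 * (PF j)^2) / 4)"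
proof -
  have "0 < g j"
    using assms(3,6) by simp
  then have "(\<forall>P :: nat \<Rightarrow> real. (\<forall>i\<in>{1..K}. P i \<ge> 0) \<longrightarrow>
      deriv (\<lambda>s. deriv (\<lambda>t. Jfun K \<sigma>2 g PD PF (P(j := t))) s) (P j) \<le> 0) \<longleftrightarrow>
    (\<forall>x\<ge>0. bernoulli_mu3 (PD j) / (\<sigma>2 + PD j * (1 - PD j) * x)^3
      \<le> bernoulli_mu3 (PF j) / (\<sigma>2 + PF j * (1 - PF j) * x)^3)"
    by (intro deriv2_Jfun_update_nonpos_all_iff assms(2,6-9))
  also have "\<dots> \<longleftrightarrow> bernoulli_mu3 (PD j) \<le> bernoulli_mu3 (PF j)"
    by (intro bernoulli_mu3_divide_cube_mono_iff assms(2,7-9))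
  also have "\<dots> \<longleftrightarrow> 3/4 - PF j / 2 - sqrt (1 + 12 * PF j - 12 * (PF j)^2) / 4 \<le> PD j \<and>
      PD j \<le> 3/4 - PF j / 2 + sqrt (1 + 12 * PF j - 12 * (PF j)^2) / 4"
    by (intro bernoulli_mu3_le_iff_between_roots assms(8))
  finally show ?thesis .
qed

end
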